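(* Let $X,Y$ be real Banach spaces, $D\subseteq X$ a nonempty open connected set, $x_0\in D$, $y_0=f(x_0)$, and $f:D\to Y$ a local homeomorphism. Then there exists a flow $\Phi:D_\Phi\to D$ in $D$ satisfying $$f(\Phi(x,t))=\Psi(f(x),t)\qquad\text{for all }(x,t)\in D_\Phi,$$ where $\Psi(y,t)=y_0+e^{-t}(y-y_0)$; any two flows in $D$ satisfying this identity coincide on the intersection of their domains, so there is a unique such flow with maximal domain. If moreover $f$ is a local $C^1$ diffeomorphism, then this maximal flow $\Phi$ is $C^1$ and is the (maximal) flow of the differential equation $$\dot x=F(x),\qquad F:D\to X,\quad F(x)=-f'(x)^{-1}\bigl(f(x)-f(x_0)\bigr).$$
   Context: A map is a local homeomorphism if every point has an open neighbourhood mapped homeomorphically onto an open set. A flow in $D$ is a map $\Phi:D_\Phi\to D$ such that: (i) $D_\Phi$ is an open subset of $D\times\mathbb R$ and $\Phi$ is continuous; (ii) for each $x\in D$, $\{t\in\mathbb R:(x,t)\in D_\Phi\}$ is an interval containing $0$; (iii) $\Phi(x,0)=x$ for all $x\in D$; (iv) if $(x,t_1),(x,t_1+t_2)\in D_\Phi$ then $(\Phi(x,t_1),t_2)\in D_\Phi$ and $\Phi(\Phi(x,t_1),t_2)=\Phi(x,t_1+t_2)$. $f$ is a local $C^1$ diffeomorphism if it is $C^1$ (Fréchet) and each point has an open neighbourhood mapped homeomorphically onto an open set with $C^1$ inverse; then $f'(x)$ is invertible for every $x$. *)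

theory Defs
  imports "HOL-Analysis.Analysis"
begin

definition local_homeo_on :: "'a::topological_space set \<Rightarrow> ('a \<Rightarrow> 'b::topological_space) \<Rightarrow> bool" where
  "local_homeo_on D f \<longleftrightarrow>
     (\<forall>x\<in>D. \<exists>U. open U \<and> x \<in> U \<and> U \<subseteq> D \<and> open (f ` U) \<and> (\<exists>g. homeomorphism U (f ` U) f g))"

definition local_C1_diffeo_on ::
  "'a::real_normed_vector set \<Rightarrow> ('a \<Rightarrow> 'b::real_normed_vector) \<Rightarrow> ('a \<Rightarrow> 'a \<Rightarrow>\<^sub>L 'b) \<Rightarrow> bool" where
  "local_C1_diffeo_on D f f' \<longleftrightarrow>
     (\<forall>x\<in>D. (f has_derivative blinfun_apply (f' x)) (at x)) \<and> continuous_on D f' \<and>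
     (\<forall>x\<in>D. \<exists>U. open U \<and> x \<in> U \<and> U \<subseteq> D \<and> open (f ` U) \<and>
        (\<exists>g g'. homeomorphism U (f ` U) f g \<and>
           (\<forall>y\<in>f ` U. (g has_derivative blinfun_apply (g' y)) (at y)) \<and> continuous_on (f ` U) g'))"

definition is_flow :: "'a::topological_space set \<Rightarrow> ('a \<times> real) set \<Rightarrow> ('a \<times> real \<Rightarrow> 'a) \<Rightarrow> bool" where
  "is_flow D DP P \<longleftrightarrow>
     openin (top_of_set (D \<times> UNIV)) DP \<and> continuous_on DP P \<and> P ` DP \<subseteq> D \<and>
     (\<forall>x\<in>D. is_interval {t. (x, t) \<in> DP} \<and> (x, 0) \<in> DP) \<and>
     (\<forall>x\<in>D. P (x, 0) = x) \<and>
     (\<forall>x t1 t2. (x, t1) \<in> DP \<longrightarrow> (x, t1 + t2) \<in> DP \<longrightarrow>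
        (P (x, t1), t2) \<in> DP \<and> P (P (x, t1), t2) = P (x, t1 + t2))"

definition Psi :: "'b::real_vector \<Rightarrow> 'b \<Rightarrow> real \<Rightarrow> 'b" where
  "Psi y0 y t = y0 + exp (- t) *\<^sub>R (y - y0)"

definition conj_flow :: "'a::topological_space set \<Rightarrow> ('a \<Rightarrow> 'b::real_vector) \<Rightarrow> 'a \<Rightarrow>
    ('a \<times> real) set \<Rightarrow> ('a \<times> real \<Rightarrow> 'a) \<Rightarrow> bool" where
  "conj_flow D f x0 DP P \<longleftrightarrow> is_flow D DP P \<and>
     (\<forall>x t. (x, t) \<in> DP \<longrightarrow> f (P (x, t)) = Psi (f x0) (f x) t)"

end

theory Submission
  imports Defs
begin

text \<open>
  A flow \<open>\<Phi>\<close> in \<open>D\<close> conjugate to \<open>\<Psi>\<close> is the same thing as a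
  family of lifts: each orbit \<open>t \<mapsto> \<Phi>(x,t)\<close> is a continuous curve through \<open>x\<close> lifting the
  \<open>\<Psi>\<close>-orbit of \<open>f x\<close>. Since lifts through a local homeomorphism are unique, any two conjugate
  flows agree, and the union of all lifts defines the maximal one.
\<close>

section \<open>Local homeomorphisms and uniqueness of lifts\<close>

lemma local_homeo_chart:
  assumes "local_homeo_on D f" "z \<in> D"
  obtains U g where "open U" "z \<in> U" "U \<subseteq> D" "open (f ` U)" "homeomorphism U (f ` U) f g"
  using assms unfolding local_homeo_on_def by blast

lemma local_homeo_continuous:
  assumes "local_homeo_on D f" "z \<in> D"
  shows "isCont f z"
proof -
  obtain U g where "open U" "z \<in> U" "homeomorphism U (f ` U) f g"
    using local_homeo_chart[OF assms] by metis
  then show ?thesis using homeomorphism_cont1 continuous_on_eq_continuous_at by blast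
qed

text \<open>The coincidence set is open (use a chart around a common value) and closed.\<close>

lemma local_homeo_lift_unique:
  fixes v w :: "real \<Rightarrow> 'a::metric_space" and f :: "'a \<Rightarrow> 'b::topological_space"
  assumes lh: "local_homeo_on D f" and J: "is_interval J"
    and cv: "continuous_on J v" and cw: "continuous_on J w"
    and vD: "v ` J \<subseteq> D"
    and same_image: "\<And>\<tau>. \<tau> \<in> J \<Longrightarrow> f (v \<tau>) = f (w \<tau>)"
    and a: "a \<in> J" "v a = w a" and t: "\<tau> \<in> J"
  shows "v \<tau> = w \<tau>"
proof -
  let ?A = "{s\<in>J. v s = w s}"
  have "openin (top_of_set J) ?A"
    unfolding openin_euclidean_subtopology_iff
  proof safe
    fix s assume s: "s \<in> J" "v s = w s"
    obtain U g where U: "open U" "v s \<in> U" "homeomorphism U (f ` U) f g"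
      using local_homeo_chart[OF lh, of "v s"] s vD by (metis image_subset_iff)
    obtain e where e: "e > 0" "ball (v s) e \<subseteq> U" using U open_contains_ball by blast
    obtain d1 where d1: "d1 > 0" "\<forall>x'\<in>J. dist x' s < d1 \<longrightarrow> dist (v x') (v s) < e"
      using cv s(1) e(1) unfolding continuous_on_iff by blast
    obtain d2 where d2: "d2 > 0" "\<forall>x'\<in>J. dist x' s < d2 \<longrightarrow> dist (w x') (w s) < e"
      using cw s(1) e(1) unfolding continuous_on_iff by blast
    show "\<exists>e>0. \<forall>x'\<in>J. dist x' s < e \<longrightarrow> x' \<in> ?A"
    proof (intro exI[of _ "min d1 d2"] conjI ballI impI)
      fix x' assume x': "x' \<in> J" "dist x' s < min d1 d2"
      have "dist (v x') (v s) < e" "dist (w x') (w s) < e" using d1 d2 x' by auto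
      then have "v x' \<in> ball (v s) e" "w x' \<in> ball (w s) e" by (auto simp: dist_commute)
      then have "v x' \<in> U" "w x' \<in> U" using e s(2) by auto
      then have "g (f (v x')) = v x'" "g (f (w x')) = w x'"
        using U(3) unfolding homeomorphism_def by auto
      then have "v x' = w x'" using same_image[OF x'(1)] by metis
      then show "x' \<in> ?A" using x'(1) by blast
    qed (use d1 d2 in simp)
  qed
  moreover have "closedin (top_of_set J) ?A"
  proof -
    have "continuous_on J (\<lambda>s. dist (v s) (w s))"
      by (intro continuous_intros cv cw)
    then have "closedin (top_of_set J) {s \<in> J. dist (v s) (w s) = 0}"
      by (rule continuous_closedin_preimage_constant)
    then show ?thesis by simp
  qed
  moreover have "connected J" using J is_interval_connected by blast
  ultimately have "?A = {} \<or> ?A = J" using connected_clopen by blast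
  then show ?thesis using a t by blast
qed

lemma isCont_prod_real_eps:
  fixes h :: "'a::metric_space \<times> real \<Rightarrow> 'c::metric_space"
  assumes "isCont h (x,s)" "e > 0"
  shows "\<exists>r>0. \<forall>x' \<tau>. dist x' x < r \<and> \<bar>\<tau> - s\<bar> < r \<longrightarrow> dist (h (x',\<tau>)) (h (x,s)) < e"
proof -
  obtain k where k: "k > 0" "\<forall>p. dist p (x,s) < k \<longrightarrow> dist (h p) (h (x,s)) < e"
    using assms unfolding continuous_at_eps_delta by blast
  show ?thesis
  proof (intro exI[of _ "k/2"] conjI allI impI)
    fix x' \<tau> assume a: "dist x' x < k/2 \<and> \<bar>\<tau> - s\<bar> < k/2"
    have "dist (x',\<tau>) (x,s) \<le> dist x' x + dist \<tau> s"
      unfolding dist_Pair_Pair using sqrt_sum_squares_le_sum_abs[of "dist x' x" "dist \<tau> s"] by simp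
    also have "\<dots> < k" using a by (simp add: dist_real_def)
    finally show "dist (h (x',\<tau>)) (h (x,s)) < e" using k by blast
  qed (use k in auto)
qed

lemma nbhd_from_one_sided:
  fixes x :: "'a::metric_space" and t :: real
  assumes fwd: "0 \<le> t \<Longrightarrow> \<exists>\<delta>>0. \<forall>x' t'. dist x' x < \<delta> \<longrightarrow> 0 \<le> t' \<longrightarrow> \<bar>t' - t\<bar> < \<delta> \<longrightarrow> P (x',t')"
    and bwd: "t \<le> 0 \<Longrightarrow> \<exists>\<delta>>0. \<forall>x' t'. dist x' x < \<delta> \<longrightarrow> t' \<le> 0 \<longrightarrow> \<bar>t' - t\<bar> < \<delta> \<longrightarrow> P (x',t')"
  shows "\<exists>\<delta>>0. \<forall>q. dist q (x,t) < \<delta> \<longrightarrow> P q"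
proof -
  have "\<exists>\<delta>>0. \<forall>x' t'. dist x' x < \<delta> \<longrightarrow> \<bar>t' - t\<bar> < \<delta> \<longrightarrow> P (x',t')"
  proof (cases "t = 0")
    case True
    obtain \<delta>1 \<delta>2 where "\<delta>1 > 0" "\<forall>x' t'. dist x' x < \<delta>1 \<longrightarrow> 0 \<le> t' \<longrightarrow> \<bar>t' - t\<bar> < \<delta>1 \<longrightarrow> P (x',t')"
      "\<delta>2 > 0" "\<forall>x' t'. dist x' x < \<delta>2 \<longrightarrow> t' \<le> 0 \<longrightarrow> \<bar>t' - t\<bar> < \<delta>2 \<longrightarrow> P (x',t')"
      using fwd bwd True by auto
    note \<delta> = this
    show ?thesis
    proof (intro exI[of _ "min \<delta>1 \<delta>2"] conjI allI impI)
      fix x' t' assume "dist x' x < min \<delta>1 \<delta>2" "\<bar>t' - t\<bar> < min \<delta>1 \<delta>2"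
      then show "P (x',t')" using \<delta> by (cases "0 \<le> t'") auto
    qed (use \<delta> in simp)
  next
    case False
    then consider "0 < t" | "t < 0" by linarith
    then show ?thesis
    proof cases
      case 1
      then obtain \<delta> where "\<delta> > 0" "\<forall>x' t'. dist x' x < \<delta> \<longrightarrow> 0 \<le> t' \<longrightarrow> \<bar>t' - t\<bar> < \<delta> \<longrightarrow> P (x',t')"
        using fwd by auto
      note \<delta> = this
      show ?thesis
      proof (intro exI[of _ "min \<delta> t"] conjI allI impI)
        fix x' t' assume "dist x' x < min \<delta> t" "\<bar>t' - t\<bar> < min \<delta> t"
        moreover have "0 \<le> t'" using calculation(2) 1 by linarith
        ultimately show "P (x',t')" using \<delta>(2) by simp
      qed (use \<delta> 1 in simp)
    next
      case 2
      then obtain \<delta> where "\<delta> > 0" "\<forall>x' t'. dist x' x < \<delta> \<longrightarrow> t' \<le> 0 \<longrightarrow> \<bar>t' - t\<bar> < \<delta> \<longrightarrow> P (x',t')"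
        using bwd by auto
      note \<delta> = this
      show ?thesis
      proof (intro exI[of _ "min \<delta> (-t)"] conjI allI impI)
        fix x' t' assume "dist x' x < min \<delta> (-t)" "\<bar>t' - t\<bar> < min \<delta> (-t)"
        moreover have "t' \<le> 0" using calculation(2) 2 by linarith
        ultimately show "P (x',t')" using \<delta>(2) by simp
      qed (use \<delta> 2 in simp)
    qed
  qed
  then obtain \<delta> where \<delta>: "\<delta> > 0" "\<forall>x' t'. dist x' x < \<delta> \<longrightarrow> \<bar>t' - t\<bar> < \<delta> \<longrightarrow> P (x',t')"
    by blast
  show ?thesis
  proof (intro exI[of _ \<delta>] conjI allI impI)
    fix q assume q: "dist q (x,t) < \<delta>"
    have "dist (fst q) x < \<delta>" "\<bar>snd q - t\<bar> < \<delta>"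
      using le_less_trans[OF dist_fst_le q] le_less_trans[OF dist_snd_le q]
      by (simp_all add: dist_real_def)
    then show "P q" using \<delta>(2) by (cases q) simp
  qed (rule \<delta>(1))
qed

section \<open>Lifting a family of paths through a local homeomorphism\<close>

definition path_lift ::
  "'a::topological_space set \<Rightarrow> ('a \<Rightarrow> 'b) \<Rightarrow> ('a \<times> real \<Rightarrow> 'b) \<Rightarrow> 'a \<Rightarrow> real \<Rightarrow> (real \<Rightarrow> 'a) \<Rightarrow> bool"
  where "path_lift D f H x a v \<longleftrightarrow> continuous_on {0..a} v \<and> v ` {0..a} \<subseteq> D \<and> v 0 = x \<and>
    (\<forall>\<sigma>\<in>{0..a}. f (v \<sigma>) = H (x,\<sigma>))"

lemma path_lift_restrict: "path_lift D f H x a v \<Longrightarrow> 0 \<le> b \<Longrightarrow> b \<le> a \<Longrightarrow> path_lift D f H x b v"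
  unfolding path_lift_def by (auto intro: continuous_on_subset)

lemma path_lift_mem:
  assumes "path_lift D f H x a v" "0 \<le> \<tau>" "\<tau> \<le> a"
  shows "v \<tau> \<in> D" "f (v \<tau>) = H (x,\<tau>)"
  using assms unfolding path_lift_def by auto

definition lifts_at ::
  "'a::metric_space set \<Rightarrow> ('a \<Rightarrow> 'b) \<Rightarrow> ('a \<times> real \<Rightarrow> 'b) \<Rightarrow> 'a \<Rightarrow> real \<Rightarrow> 'a \<Rightarrow> bool"
  where "lifts_at D f H x s y \<longleftrightarrow> (\<forall>\<epsilon>>0. \<exists>\<delta>>0. \<forall>x'. dist x' x < \<delta> \<longrightarrow>
    x' \<in> D \<and> (\<exists>v. path_lift D f H x' s v \<and> dist (v s) y < \<epsilon>))"

definition lifts_near ::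
  "'a::metric_space set \<Rightarrow> ('a \<Rightarrow> 'b) \<Rightarrow> ('a \<times> real \<Rightarrow> 'b) \<Rightarrow> 'a \<Rightarrow> real \<Rightarrow> 'a \<Rightarrow> bool"
  where "lifts_near D f H x s y \<longleftrightarrow> (\<forall>\<epsilon>>0. \<exists>\<delta>>0. \<forall>x' \<tau>. dist x' x < \<delta> \<longrightarrow> 0 \<le> \<tau> \<longrightarrow> \<bar>\<tau> - s\<bar> < \<delta> \<longrightarrow>
    x' \<in> D \<and> (\<exists>v. path_lift D f H x' \<tau> v \<and> dist (v \<tau>) y < \<epsilon>))"

lemma lifts_near_imp_lifts_at: "lifts_near D f H x s y \<Longrightarrow> 0 \<le> s \<Longrightarrow> lifts_at D f H x s y"
  unfolding lifts_near_def lifts_at_def by fastforce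

context
  fixes D :: "'a::metric_space set" and f :: "'a \<Rightarrow> 'b::metric_space" and H :: "'a \<times> real \<Rightarrow> 'b"
  assumes open_D: "open D" and lh: "local_homeo_on D f"
    and H_cont: "\<And>x s. x \<in> D \<Longrightarrow> isCont H (x,s)" and H_0: "\<And>x. x \<in> D \<Longrightarrow> H (x,0) = f x"
begin

lemma H_time_continuous:
  assumes x: "x \<in> D" shows "continuous_on S (\<lambda>\<tau>. H (x,\<tau>))"
proof (intro continuous_at_imp_continuous_on ballI)
  fix \<tau>
  have "isCont (H \<circ> (\<lambda>\<tau>. (x,\<tau>))) \<tau>"
    using H_cont[OF x] by (intro continuous_at_compose continuous_intros) simp
  then show "isCont (\<lambda>\<tau>. H (x,\<tau>)) \<tau>" by (simp add: o_def)
qed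

lemma chart_time_continuous:
  assumes U: "homeomorphism U (f ` U) f g" and x: "x \<in> D"
    and sub: "\<And>\<tau>. \<tau> \<in> S \<Longrightarrow> H (x,\<tau>) \<in> f ` U"
  shows "continuous_on S (\<lambda>\<tau>. g (H (x,\<tau>)))"
proof (rule continuous_on_compose2[OF homeomorphism_cont2[OF U] H_time_continuous[OF x]])
  show "(\<lambda>\<tau>. H (x,\<tau>)) ` S \<subseteq> f ` U" using sub by (rule image_subsetI)
qed

lemma chart_isCont:
  assumes U: "homeomorphism U (f ` U) f g" "open (f ` U)" and x: "x \<in> D"
    and Hs: "H (x,s) \<in> f ` U"
  shows "isCont (\<lambda>p. g (H p)) (x,s)"
proof -
  have "isCont g (H (x,s))"
    using homeomorphism_cont2[OF U(1)] U(2) Hs continuous_on_eq_continuous_at by blast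
  then show ?thesis using continuous_at_compose[OF H_cont[OF x]] by (simp add: o_def)
qed

lemma H_window:
  assumes x: "x \<in> D" and V: "open V" "H (x,s) \<in> V"
  shows "\<exists>r>0. \<forall>x' \<tau>. dist x' x < r \<and> \<bar>\<tau> - s\<bar> < r \<longrightarrow> x' \<in> D \<and> H (x',\<tau>) \<in> V"
proof -
  obtain e where e: "e > 0" "ball (H (x,s)) e \<subseteq> V" using V open_contains_ball by blast
  obtain r1 where r1: "r1 > 0"
    "\<forall>x' \<tau>. dist x' x < r1 \<and> \<bar>\<tau> - s\<bar> < r1 \<longrightarrow> dist (H (x',\<tau>)) (H (x,s)) < e"
    using isCont_prod_real_eps[OF H_cont[OF x] e(1)] by blast
  obtain r2 where r2: "r2 > 0" "ball x r2 \<subseteq> D" using open_D x open_contains_ball by blast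
  show ?thesis
  proof (intro exI[of _ "min r1 r2"] conjI allI impI)
    fix x' \<tau> assume a: "dist x' x < min r1 r2 \<and> \<bar>\<tau> - s\<bar> < min r1 r2"
    then have "x' \<in> ball x r2" by (simp add: dist_commute)
    then show "x' \<in> D" using r2 by blast
    have "dist (H (x',\<tau>)) (H (x,s)) < e" using a r1 by simp
    then have "H (x',\<tau>) \<in> ball (H (x,s)) e" by (simp add: dist_commute)
    then show "H (x',\<tau>) \<in> V" using e by blast
  qed (use r1 r2 in simp)
qed

lemma path_lift_in_chart:
  assumes U: "homeomorphism U (f ` U) f g"
    and x': "x' \<in> D" and v: "path_lift D f H x' \<sigma> v" "v \<sigma> \<in> U" and \<sigma>': "0 \<le> \<sigma>'" "\<sigma>' \<le> \<sigma>"
    and Hin: "\<And>\<tau>. \<tau> \<in> {\<sigma>'..\<sigma>} \<Longrightarrow> H (x',\<tau>) \<in> f ` U"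
  shows "v \<sigma>' = g (H (x',\<sigma>'))"
proof -
  have gf: "\<And>y. y \<in> U \<Longrightarrow> g (f y) = y" and fg: "\<And>y. y \<in> f ` U \<Longrightarrow> f (g y) = y"
    using U unfolding homeomorphism_def by auto
  show ?thesis
  proof (rule local_homeo_lift_unique[OF lh, of "{\<sigma>'..\<sigma>}" v "\<lambda>\<tau>. g (H (x',\<tau>))" \<sigma>])
    show "continuous_on {\<sigma>'..\<sigma>} v"
      using v(1) \<sigma>' unfolding path_lift_def by (auto intro: continuous_on_subset)
    show "continuous_on {\<sigma>'..\<sigma>} (\<lambda>\<tau>. g (H (x', \<tau>)))"
      by (rule chart_time_continuous[OF U x' Hin])
    show "v ` {\<sigma>'..\<sigma>} \<subseteq> D" using path_lift_mem(1)[OF v(1)] \<sigma>' by auto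
    show "f (v \<tau>) = f (g (H (x', \<tau>)))" if "\<tau> \<in> {\<sigma>'..\<sigma>}" for \<tau>
      using that path_lift_mem(2)[OF v(1), of \<tau>] \<sigma>' fg[OF Hin[OF that]] by simp
    show "v \<sigma> = g (H (x', \<sigma>))"
      using path_lift_mem(2)[OF v(1), of \<sigma>] \<sigma>' gf[OF v(2)] by simp
  qed (use \<sigma>' in \<open>auto simp: is_interval_cc\<close>)
qed

lemma path_lift_extend_in_chart:
  assumes U: "homeomorphism U (f ` U) f g" "U \<subseteq> D"
    and x': "x' \<in> D" and v: "path_lift D f H x' \<sigma> v" "v \<sigma> \<in> U" and \<sigma>: "0 \<le> \<sigma>" "\<sigma> \<le> \<sigma>'"
    and Hin: "\<And>\<tau>. \<tau> \<in> {\<sigma>..\<sigma>'} \<Longrightarrow> H (x',\<tau>) \<in> f ` U"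
  shows "path_lift D f H x' \<sigma>' (\<lambda>\<tau>. if \<tau> \<le> \<sigma> then v \<tau> else g (H (x',\<tau>)))"
  unfolding path_lift_def
proof (intro conjI ballI)
  let ?v' = "\<lambda>\<tau>. if \<tau> \<le> \<sigma> then v \<tau> else g (H (x',\<tau>))"
  have gf: "\<And>y. y \<in> U \<Longrightarrow> g (f y) = y" and fg: "\<And>y. y \<in> f ` U \<Longrightarrow> f (g y) = y"
    and gU: "\<And>y. y \<in> f ` U \<Longrightarrow> g y \<in> U"
    using U(1) unfolding homeomorphism_def by auto
  have glue: "v \<sigma> = g (H (x',\<sigma>))"
    using path_lift_mem(2)[OF v(1), of \<sigma>] \<sigma> gf[OF v(2)] by simp
  have pieces: "{\<tau> \<in> {0..\<sigma>'}. \<tau> \<le> \<sigma>} = {0..\<sigma>}" "{\<tau> \<in> {0..\<sigma>'}. \<sigma> \<le> \<tau>} = {\<sigma>..\<sigma>'}"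
    using \<sigma> by auto
  have "continuous_on {0..\<sigma>} v" using v(1) unfolding path_lift_def by auto
  moreover have "continuous_on {\<sigma>..\<sigma>'} (\<lambda>\<tau>. g (H (x',\<tau>)))"
    by (rule chart_time_continuous[OF U(1) x' Hin])
  ultimately show "continuous_on {0..\<sigma>'} ?v'"
    using glue by (intro continuous_on_cases_le[where h="\<lambda>\<tau>. \<tau>"]) (simp_all only: pieces continuous_on_id)
  show "?v' ` {0..\<sigma>'} \<subseteq> D"
    using path_lift_mem(1)[OF v(1)] Hin gU U(2) by (auto simp: not_le)
  show "?v' 0 = x'" using v(1) \<sigma> unfolding path_lift_def by simp
  show "f (?v' \<tau>) = H (x', \<tau>)" if "\<tau> \<in> {0..\<sigma>'}" for \<tau>
    using that path_lift_mem(2)[OF v(1), of \<tau>] Hin[of \<tau>] fg by auto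
qed

lemma path_lift_move_in_chart:
  assumes U: "homeomorphism U (f ` U) f g" "U \<subseteq> D"
    and x': "x' \<in> D" and v: "path_lift D f H x' \<sigma> v" "v \<sigma> \<in> U" and \<sigma>: "0 \<le> \<sigma>" "0 \<le> \<sigma>'"
    and Hin: "\<And>\<tau>. min \<sigma> \<sigma>' \<le> \<tau> \<Longrightarrow> \<tau> \<le> max \<sigma> \<sigma>' \<Longrightarrow> H (x',\<tau>) \<in> f ` U"
  shows "\<exists>v'. path_lift D f H x' \<sigma>' v' \<and> v' \<sigma>' = g (H (x',\<sigma>'))"
proof (cases "\<sigma>' \<le> \<sigma>")
  case True
  then show ?thesis
    using path_lift_in_chart[OF U(1) x' v \<sigma>(2) True] path_lift_restrict[OF v(1) \<sigma>(2) True] Hin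
    by (metis atLeastAtMost_iff max.absorb1 min.absorb2)
next
  case False
  then show ?thesis
    using path_lift_extend_in_chart[OF U x' v \<sigma>(1), of \<sigma>'] Hin by (auto simp: min_def max_def)
qed

lemma lifts_at_zero: "x \<in> D \<Longrightarrow> lifts_at D f H x 0 x"
  unfolding lifts_at_def
proof (intro allI impI)
  fix \<epsilon> :: real assume \<epsilon>: "\<epsilon> > 0" and x: "x \<in> D"
  obtain r where r: "r > 0" "ball x r \<subseteq> D" using open_D x open_contains_ball by blast
  show "\<exists>\<delta>>0. \<forall>x'. dist x' x < \<delta> \<longrightarrow> x' \<in> D \<and> (\<exists>v. path_lift D f H x' 0 v \<and> dist (v 0) x < \<epsilon>)"
  proof (intro exI[of _ "min \<epsilon> r"] conjI allI impI)
    fix x' assume a: "dist x' x < min \<epsilon> r"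
    then show x'D: "x' \<in> D" using r by (auto simp: dist_commute)
    have "path_lift D f H x' 0 (\<lambda>_. x')" unfolding path_lift_def using H_0[OF x'D] x'D by simp
    then show "\<exists>v. path_lift D f H x' 0 v \<and> dist (v 0) x < \<epsilon>" using a by auto
  qed (use \<epsilon> r in simp)
qed

text \<open>Let \<open>(U,g)\<close> be a chart such that \<open>H (x',\<tau>) \<in> f ` U\<close> on a window of
  radius \<open>r\<close> around \<open>(x,s)\<close>. If perturbed lifts over \<open>[0,\<sigma>]\<close> end near a point of \<open>U\<close>, they end
  in \<open>U\<close>, can be moved within the chart to any time near \<open>\<sigma>'\<close>, and then end near
  \<open>g (H (x,\<sigma>'))\<close> by continuity of \<open>g \<circ> H\<close>.\<close>

lemma lifts_near_in_chart:
  assumes U: "open U" "U \<subseteq> D" "open (f ` U)" "homeomorphism U (f ` U) f g" and x: "x \<in> D"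
    and r: "\<forall>x' \<tau>. dist x' x < r \<and> \<bar>\<tau> - s\<bar> < r \<longrightarrow> x' \<in> D \<and> H (x',\<tau>) \<in> f ` U"
    and \<sigma>: "0 \<le> \<sigma>" "\<bar>\<sigma> - s\<bar> < r/2" "\<bar>\<sigma>' - s\<bar> < r/2"
    and G: "lifts_at D f H x \<sigma> y" and y: "y \<in> U"
  shows "lifts_near D f H x \<sigma>' (g (H (x,\<sigma>')))"
  unfolding lifts_near_def
proof (intro allI impI)
  fix \<epsilon> :: real assume \<epsilon>: "\<epsilon> > 0"
  have r_pos: "r > 0" using \<sigma>(3) abs_ge_zero[of "\<sigma>' - s"] by linarith
  have H\<sigma>': "H (x,\<sigma>') \<in> f ` U" using r \<sigma>(3) r_pos by simp
  obtain \<kappa> where \<kappa>: "\<kappa> > 0"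
    "\<forall>x' \<tau>. dist x' x < \<kappa> \<and> \<bar>\<tau> - \<sigma>'\<bar> < \<kappa> \<longrightarrow> dist (g (H (x',\<tau>))) (g (H (x,\<sigma>'))) < \<epsilon>"
    using isCont_prod_real_eps[OF chart_isCont[OF U(4) U(3) x H\<sigma>'] \<epsilon>] by blast
  obtain \<rho> where \<rho>: "\<rho> > 0" "ball y \<rho> \<subseteq> U" using U(1) y open_contains_ball by blast
  obtain \<delta>1 where \<delta>1: "\<delta>1 > 0"
    "\<forall>x'. dist x' x < \<delta>1 \<longrightarrow> x' \<in> D \<and> (\<exists>v. path_lift D f H x' \<sigma> v \<and> dist (v \<sigma>) y < \<rho>)"
    using G \<rho>(1) unfolding lifts_at_def by blast
  show "\<exists>\<delta>>0. \<forall>x' \<tau>. dist x' x < \<delta> \<longrightarrow> 0 \<le> \<tau> \<longrightarrow> \<bar>\<tau> - \<sigma>'\<bar> < \<delta> \<longrightarrow>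
      x' \<in> D \<and> (\<exists>v. path_lift D f H x' \<tau> v \<and> dist (v \<tau>) (g (H (x,\<sigma>'))) < \<epsilon>)"
  proof (intro exI[of _ "min (min \<delta>1 \<kappa>) (r/2)"] conjI allI impI)
    fix x' \<tau> assume dx: "dist x' x < min (min \<delta>1 \<kappa>) (r/2)"
      and \<tau>: "0 \<le> \<tau>" "\<bar>\<tau> - \<sigma>'\<bar> < min (min \<delta>1 \<kappa>) (r/2)"
    obtain v where x'D: "x' \<in> D" and v: "path_lift D f H x' \<sigma> v" "dist (v \<sigma>) y < \<rho>"
      using \<delta>1(2) dx by auto
    show "x' \<in> D" by fact
    have "v \<sigma> \<in> U" using v(2) \<rho>(2) by (auto simp: dist_commute)
    moreover have "H (x',\<tau>') \<in> f ` U" if "min \<sigma> \<tau> \<le> \<tau>'" "\<tau>' \<le> max \<sigma> \<tau>" for \<tau>'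
    proof -
      have "\<bar>\<tau> - \<sigma>'\<bar> < r/2" using \<tau>(2) by simp
      then have "\<bar>\<tau>' - s\<bar> < r" using that \<sigma>(2,3)
        by (auto simp: min_def max_def split: if_splits; arith)
      moreover have "dist x' x < r" using dx r_pos by simp
      ultimately show ?thesis using r by blast
    qed
    ultimately obtain v' where v': "path_lift D f H x' \<tau> v'" "v' \<tau> = g (H (x',\<tau>))"
      using path_lift_move_in_chart[OF U(4) U(2) x'D v(1)] \<sigma>(1) \<tau>(1) by auto
    have "dist (g (H (x',\<tau>))) (g (H (x,\<sigma>'))) < \<epsilon>" using \<kappa>(2) dx \<tau>(2) by simp
    then show "\<exists>v. path_lift D f H x' \<tau> v \<and> dist (v \<tau>) (g (H (x,\<sigma>'))) < \<epsilon>"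
      using v' by auto
  qed (use \<delta>1 \<kappa> r_pos in simp)
qed

text \<open>Propagation along a given lift \<open>u\<close>: near each \<open>s \<in> [0,t]\<close>, a chart around \<open>u s\<close> in which
  \<open>u\<close> itself is \<open>g \<circ> H\<close> lets \<open>lifts_at\<close> at one time pass to \<open>lifts_near\<close> at any other.\<close>

lemma lifts_propagate:
  assumes u: "path_lift D f H x t u" and s: "s \<in> {0..t}"
  shows "\<exists>r>0. \<forall>\<sigma>\<in>{0..t}. \<forall>\<sigma>'\<in>{0..t}. \<bar>\<sigma> - s\<bar> < r \<longrightarrow> \<bar>\<sigma>' - s\<bar> < r \<longrightarrow>
    lifts_at D f H x \<sigma> (u \<sigma>) \<longrightarrow> lifts_near D f H x \<sigma>' (u \<sigma>')"
proof -
  have x: "x \<in> D" using path_lift_mem(1)[OF u, of 0] u s unfolding path_lift_def by auto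
  have zD: "u s \<in> D" and fz: "f (u s) = H (x,s)" using path_lift_mem[OF u, of s] s by auto
  obtain U g where U: "open U" "u s \<in> U" "U \<subseteq> D" "open (f ` U)" "homeomorphism U (f ` U) f g"
    using local_homeo_chart[OF lh zD] by blast
  have gf: "\<And>y. y \<in> U \<Longrightarrow> g (f y) = y" and fg: "\<And>y. y \<in> f ` U \<Longrightarrow> f (g y) = y"
    and gU: "\<And>y. y \<in> f ` U \<Longrightarrow> g y \<in> U"
    using U(5) unfolding homeomorphism_def by auto
  have Hs: "H (x,s) \<in> f ` U" using fz U(2) by (metis imageI)
  obtain r where r: "r > 0" "\<forall>x' \<tau>. dist x' x < r \<and> \<bar>\<tau> - s\<bar> < r \<longrightarrow> x' \<in> D \<and> H (x',\<tau>) \<in> f ` U"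
    using H_window[OF x U(4) Hs] by blast
  define J where "J = {\<tau>. 0 \<le> \<tau> \<and> \<tau> \<le> t \<and> \<bar>\<tau> - s\<bar> < r}"
  have HJ: "H (x,\<tau>) \<in> f ` U" if "\<tau> \<in> J" for \<tau> using that r unfolding J_def by simp
  have u_chart: "u \<tau> = g (H (x,\<tau>))" if "\<tau> \<in> J" for \<tau>
  proof (rule local_homeo_lift_unique[OF lh, of J u "\<lambda>\<tau>. g (H (x,\<tau>))" s])
    have JS: "J \<subseteq> {0..t}" unfolding J_def by auto
    show "is_interval J" unfolding J_def is_interval_1 by auto
    show "continuous_on J u" using u JS unfolding path_lift_def using continuous_on_subset by blast
    show "continuous_on J (\<lambda>\<tau>. g (H (x,\<tau>)))" by (rule chart_time_continuous[OF U(5) x HJ])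
    show "u ` J \<subseteq> D" using u JS unfolding path_lift_def by blast
    show "f (u \<tau>) = f (g (H (x,\<tau>)))" if "\<tau> \<in> J" for \<tau>
      using path_lift_mem(2)[OF u, of \<tau>] that JS fg[OF HJ[OF that]] by auto
    show "s \<in> J" using s r(1) unfolding J_def by simp
    show "u s = g (H (x,s))" using gf[OF U(2)] fz by simp
  qed (rule that)
  show ?thesis
  proof (intro exI[of _ "r/2"] conjI ballI impI)
    fix \<sigma> \<sigma>' assume \<sigma>: "\<sigma> \<in> {0..t}" "\<sigma>' \<in> {0..t}" "\<bar>\<sigma> - s\<bar> < r/2" "\<bar>\<sigma>' - s\<bar> < r/2"
      and G: "lifts_at D f H x \<sigma> (u \<sigma>)"
    have "\<bar>\<sigma> - s\<bar> < r" "\<bar>\<sigma>' - s\<bar> < r"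
      using \<sigma>(3,4) abs_ge_zero[of "\<sigma> - s"] abs_ge_zero[of "\<sigma>' - s"] by linarith+
    then have \<sigma>J: "\<sigma> \<in> J" "\<sigma>' \<in> J" using \<sigma>(1,2) unfolding J_def by auto
    have "u \<sigma> \<in> U" using u_chart[OF \<sigma>J(1)] gU[OF HJ[OF \<sigma>J(1)]] by simp
    from lifts_near_in_chart[OF U(1,3,4,5) x r(2) _ \<sigma>(3,4) G this] \<sigma>(1)
    show "lifts_near D f H x \<sigma>' (u \<sigma>')" using u_chart[OF \<sigma>J(2)] by simp
  qed (use r in simp)
qed

text \<open>Parametrised path lifting: by connectedness of \<open>[0,t]\<close> the property \<open>lifts_at\<close> travels
  from time \<open>0\<close> (where it is trivial) to time \<open>t\<close>; one more local step upgrades it to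
  \<open>lifts_near\<close>.\<close>

lemma path_lift_stable:
  assumes u: "path_lift D f H x t u" and t: "0 \<le> t"
  shows "lifts_near D f H x t (u t)"
proof -
  have u0: "u 0 = x" and x: "x \<in> D" using u t unfolding path_lift_def by auto
  have "lifts_at D f H x t (u t)"
  proof (rule connected_induction_simple[where P = "\<lambda>\<sigma>. lifts_at D f H x \<sigma> (u \<sigma>)"])
    show "connected {0..t}" "0 \<in> {0..t}" "t \<in> {0..t}" using t by auto
    show "lifts_at D f H x 0 (u 0)" using lifts_at_zero[OF x] u0 by simp
    fix s assume s: "s \<in> {0..t}"
    obtain r where r: "r > 0" "\<forall>\<sigma>\<in>{0..t}. \<forall>\<sigma>'\<in>{0..t}. \<bar>\<sigma> - s\<bar> < r \<longrightarrow> \<bar>\<sigma>' - s\<bar> < r \<longrightarrow>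
        lifts_at D f H x \<sigma> (u \<sigma>) \<longrightarrow> lifts_near D f H x \<sigma>' (u \<sigma>')"
      using lifts_propagate[OF u s] by blast
    show "\<exists>T. openin (top_of_set {0..t}) T \<and> s \<in> T \<and>
        (\<forall>\<sigma>\<in>T. \<forall>\<sigma>'\<in>T. lifts_at D f H x \<sigma> (u \<sigma>) \<longrightarrow> lifts_at D f H x \<sigma>' (u \<sigma>'))"
    proof (intro exI[of _ "{0..t} \<inter> ball s r"] conjI ballI impI)
      show "openin (top_of_set {0..t}) ({0..t} \<inter> ball s r)" by (simp add: openin_open_Int)
      show "s \<in> {0..t} \<inter> ball s r" using s r(1) by simp
      fix \<sigma> \<sigma>' assume a: "\<sigma> \<in> {0..t} \<inter> ball s r" "\<sigma>' \<in> {0..t} \<inter> ball s r"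
        "lifts_at D f H x \<sigma> (u \<sigma>)"
      then have "lifts_near D f H x \<sigma>' (u \<sigma>')"
        using r(2) by (auto simp: dist_real_def abs_minus_commute)
      then show "lifts_at D f H x \<sigma>' (u \<sigma>')" using a(2) lifts_near_imp_lifts_at by auto
    qed
  qed
  moreover obtain r where "r > 0" "\<forall>\<sigma>\<in>{0..t}. \<forall>\<sigma>'\<in>{0..t}. \<bar>\<sigma> - t\<bar> < r \<longrightarrow> \<bar>\<sigma>' - t\<bar> < r \<longrightarrow>
      lifts_at D f H x \<sigma> (u \<sigma>) \<longrightarrow> lifts_near D f H x \<sigma>' (u \<sigma>')"
    using lifts_propagate[OF u, of t] t by auto
  ultimately show ?thesis using t by (metis atLeastAtMost_iff abs_zero diff_self order_refl)
qed

end

section \<open>The maximal flow conjugate to \<open>\<Psi>\<close>\<close>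

lemma Psi_0 [simp]: "Psi y0 y 0 = y"
  by (simp add: Psi_def)

lemma Psi_add: "Psi y0 y (a + b) = Psi y0 (Psi y0 y a) b"
  by (simp add: Psi_def exp_add[symmetric] algebra_simps)

text \<open>Every orbit of a conjugate flow is such a
  curve, and the maximal flow is obtained by taking all of them.\<close>

definition psi_lift ::
  "'a::topological_space set \<Rightarrow> ('a \<Rightarrow> 'b::real_vector) \<Rightarrow> 'a \<Rightarrow> 'a \<Rightarrow> real set \<Rightarrow> (real \<Rightarrow> 'a) \<Rightarrow> bool"
  where "psi_lift D f x0 x J u \<longleftrightarrow> is_interval J \<and> 0 \<in> J \<and> continuous_on J u \<and> u ` J \<subseteq> D \<and>
    u 0 = x \<and> (\<forall>s\<in>J. f (u s) = Psi (f x0) (f x) s)"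

definition flow_domain :: "'a::topological_space set \<Rightarrow> ('a \<Rightarrow> 'b::real_vector) \<Rightarrow> 'a \<Rightarrow> ('a \<times> real) set"
  where "flow_domain D f x0 = {(x,t). \<exists>J u. psi_lift D f x0 x J u \<and> t \<in> J}"

definition max_flow :: "'a::topological_space set \<Rightarrow> ('a \<Rightarrow> 'b::real_vector) \<Rightarrow> 'a \<Rightarrow> 'a \<times> real \<Rightarrow> 'a"
  where "max_flow D f x0 p = (SOME y. \<exists>J u. psi_lift D f x0 (fst p) J u \<and> snd p \<in> J \<and> u (snd p) = y)"

lemma flow_domainE:
  assumes "(x,t) \<in> flow_domain D f x0"
  obtains J u where "psi_lift D f x0 x J u" "t \<in> J"
  using assms unfolding flow_domain_def by blast

lemma psi_lift_const: "x \<in> D \<Longrightarrow> psi_lift D f x0 x {0} (\<lambda>_. x)"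
  unfolding psi_lift_def by (auto simp: is_interval_1)

text \<open>Time shift of a \<open>\<Psi>\<close>-lift is again a \<open>\<Psi>\<close>-lift (this gives the group law of the flow).\<close>

lemma psi_lift_shift:
  assumes A: "psi_lift D f x0 x K w" and t1: "t1 \<in> K"
  shows "psi_lift D f x0 (w t1) {s. t1 + s \<in> K} (\<lambda>s. w (t1 + s))"
  unfolding psi_lift_def
proof (intro conjI ballI)
  have iK: "is_interval K" and cK: "continuous_on K w" and iD: "w ` K \<subseteq> D"
    and fw: "\<forall>s\<in>K. f (w s) = Psi (f x0) (f x) s"
    using A unfolding psi_lift_def by auto
  show "is_interval {s. t1 + s \<in> K}" unfolding is_interval_1
  proof (intro ballI allI impI)
    fix a b y assume "a \<in> {s. t1 + s \<in> K}" "b \<in> {s. t1 + s \<in> K}" "a \<le> y \<and> y \<le> b"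
    then have "t1 + a \<in> K" "t1 + b \<in> K" "t1 + a \<le> t1 + y" "t1 + y \<le> t1 + b" by auto
    then show "y \<in> {s. t1 + s \<in> K}" using iK unfolding is_interval_1 by blast
  qed
  show "0 \<in> {s. t1 + s \<in> K}" using t1 by simp
  have m: "(\<lambda>s. t1 + s) ` {s. t1 + s \<in> K} \<subseteq> K" by auto
  show "continuous_on {s. t1 + s \<in> K} (\<lambda>s. w (t1 + s))"
    by (rule continuous_on_compose2[OF cK _ m]) (intro continuous_intros)
  show "(\<lambda>s. w (t1 + s)) ` {s. t1 + s \<in> K} \<subseteq> D" using iD m by auto
  show "w (t1 + 0) = w t1" by simp
  fix s assume "s \<in> {s. t1 + s \<in> K}"
  then have "f (w (t1 + s)) = Psi (f x0) (f x) (t1 + s)" using fw by simp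
  also have "\<dots> = Psi (f x0) (f (w t1)) s" using Psi_add fw t1 by simp
  finally show "f (w (t1 + s)) = Psi (f x0) (f (w t1)) s" .
qed

context
  fixes D :: "'a::metric_space set" and f :: "'a \<Rightarrow> 'b::real_normed_vector" and x0 :: 'a
  assumes open_D: "open D" and lh: "local_homeo_on D f"
begin

text \<open>Uniqueness of \<open>\<Psi>\<close>-lifts makes \<open>max_flow\<close> well defined: it is the value of any lift.\<close>

lemma psi_lift_agree:
  assumes A: "psi_lift D f x0 x J1 u1" and B: "psi_lift D f x0 x J2 u2" and t: "t \<in> J1" "t \<in> J2"
  shows "u1 t = u2 t"
proof (rule local_homeo_lift_unique[OF lh, of "J1 \<inter> J2" u1 u2 0])
  show "is_interval (J1 \<inter> J2)" using A B unfolding psi_lift_def by (simp add: is_interval_Int)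
  show "continuous_on (J1 \<inter> J2) u1" using A unfolding psi_lift_def by (meson continuous_on_subset inf_le1)
  show "continuous_on (J1 \<inter> J2) u2" using B unfolding psi_lift_def by (meson continuous_on_subset inf_le2)
  show "u1 ` (J1 \<inter> J2) \<subseteq> D" using A unfolding psi_lift_def by blast
  show "f (u1 s) = f (u2 s)" if "s \<in> J1 \<inter> J2" for s using A B that unfolding psi_lift_def by simp
  show "0 \<in> J1 \<inter> J2" "u1 0 = u2 0" using A B unfolding psi_lift_def by simp_all
qed (use t in simp)

lemma max_flow_eq:
  assumes A: "psi_lift D f x0 x J u" and t: "t \<in> J"
  shows "(x,t) \<in> flow_domain D f x0" "max_flow D f x0 (x,t) = u t"
proof -
  show "(x,t) \<in> flow_domain D f x0" using A t unfolding flow_domain_def by blast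
  let ?P = "\<lambda>y. \<exists>J u. psi_lift D f x0 x J u \<and> t \<in> J \<and> u t = y"
  have "?P (u t)" using A t by blast
  then have "?P (SOME y. ?P y)" by (rule someI)
  then obtain J' u' where B: "psi_lift D f x0 x J' u'" "t \<in> J'" "u' t = (SOME y. ?P y)" by blast
  then show "max_flow D f x0 (x,t) = u t" using psi_lift_agree[OF B(1) A B(2) t] unfolding max_flow_def by simp
qed

lemma max_flow_mem:
  assumes "(x,t) \<in> flow_domain D f x0"
  shows "f (max_flow D f x0 (x,t)) = Psi (f x0) (f x) t" "max_flow D f x0 (x,t) \<in> D" "x \<in> D"
proof -
  obtain J u where A: "psi_lift D f x0 x J u" "t \<in> J" using flow_domainE[OF assms] by blast
  then show "f (max_flow D f x0 (x,t)) = Psi (f x0) (f x) t" "max_flow D f x0 (x,t) \<in> D"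
    using max_flow_eq(2)[OF A] unfolding psi_lift_def by auto
  show "x \<in> D" using A unfolding psi_lift_def by (metis image_subset_iff)
qed

text \<open>The homotopies \<open>(x,s) \<mapsto> \<Psi>(f x, \<plusminus>s)\<close> start at \<open>f\<close>; their lifts over \<open>[0,a]\<close> are exactly the
  \<open>\<Psi>\<close>-lifts over \<open>[0,a]\<close> resp. \<open>[-a,0]\<close>, so the path-lifting results apply in both time directions.\<close>

abbreviation "H_fwd \<equiv> (\<lambda>p. Psi (f x0) (f (fst p)) (snd p))"
abbreviation "H_bwd \<equiv> (\<lambda>p. Psi (f x0) (f (fst p)) (- snd p))"

lemma H_fwd_bwd_isCont:
  assumes "x \<in> D"
  shows "isCont H_fwd (x,s)" "isCont H_bwd (x,s)"
proof -
  have "isCont (f \<circ> fst) (x,s)"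
  proof (rule continuous_at_compose)
    show "isCont fst (x,s)" by (intro continuous_intros)
    show "isCont f (fst (x,s))" using local_homeo_continuous[OF lh assms] by simp
  qed
  then have f_fst: "isCont (\<lambda>p. f (fst p)) (x,s)" by (simp add: o_def)
  show "isCont H_fwd (x,s)" unfolding Psi_def by (intro continuous_intros f_fst)
  show "isCont H_bwd (x,s)" unfolding Psi_def by (intro continuous_intros f_fst)
qed

lemma psi_lift_of_fwd: "path_lift D f H_fwd x a v \<Longrightarrow> 0 \<le> a \<Longrightarrow> psi_lift D f x0 x {0..a} v"
  unfolding path_lift_def psi_lift_def by (simp add: is_interval_cc)

lemma fwd_of_psi_lift:
  assumes A: "psi_lift D f x0 x J u" and t: "t \<in> J" "0 \<le> t"
  shows "path_lift D f H_fwd x t u"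
proof -
  have "{0..t} \<subseteq> J" using A t unfolding psi_lift_def is_interval_1 by auto
  then show ?thesis using A unfolding psi_lift_def path_lift_def by (auto intro: continuous_on_subset)
qed

lemma psi_lift_of_bwd:
  assumes v: "path_lift D f H_bwd x a v" and a: "0 \<le> a"
  shows "psi_lift D f x0 x {-a..0} (\<lambda>s. v (-s))"
  unfolding psi_lift_def
proof (intro conjI ballI)
  have c: "continuous_on {0..a} v" and im: "v ` {0..a} \<subseteq> D" and v0: "v 0 = x"
    and fv: "\<forall>\<sigma>\<in>{0..a}. f (v \<sigma>) = H_bwd (x,\<sigma>)" using v unfolding path_lift_def by auto
  have m: "uminus ` {-a..0} \<subseteq> {0..a}" by auto
  show "continuous_on {-a..0} (\<lambda>s. v (-s))"
    by (rule continuous_on_compose2[OF c _ m]) (intro continuous_intros)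
  show "(\<lambda>s. v (-s)) ` {-a..0} \<subseteq> D" using im m by auto
  show "v (-0) = x" using v0 by simp
  show "is_interval {-a..0}" by (simp add: is_interval_cc)
  show "0 \<in> {-a..0}" using a by simp
  fix s :: real assume "s \<in> {-a..0}"
  then have "-s \<in> {0..a}" by auto
  then show "f (v (-s)) = Psi (f x0) (f x) s" using fv by auto
qed

lemma bwd_of_psi_lift:
  assumes A: "psi_lift D f x0 x J u" and t: "t \<in> J" "t \<le> 0"
  shows "path_lift D f H_bwd x (-t) (\<lambda>s. u (-s))"
proof -
  have "{t..0} \<subseteq> J" using A t unfolding psi_lift_def is_interval_1 by auto
  then have m: "uminus ` {0..-t} \<subseteq> J" by auto
  have c: "continuous_on J u" using A unfolding psi_lift_def by simp
  show ?thesis unfolding path_lift_def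
  proof (intro conjI ballI)
    show "continuous_on {0..-t} (\<lambda>s. u (-s))"
      by (rule continuous_on_compose2[OF c _ m]) (intro continuous_intros)
    show "(\<lambda>s. u (-s)) ` {0..-t} \<subseteq> D"
    proof (rule image_subsetI)
      fix \<sigma> :: real assume "\<sigma> \<in> {0..-t}"
      then have "-\<sigma> \<in> J" using m by auto
      then show "u (-\<sigma>) \<in> D" using A unfolding psi_lift_def by auto
    qed
    show "u (-0) = x" using A unfolding psi_lift_def by simp
    fix \<sigma> :: real assume "\<sigma> \<in> {0..-t}"
    then have "-\<sigma> \<in> J" using m by auto
    then show "f (u (-\<sigma>)) = H_bwd (x,\<sigma>)" using A unfolding psi_lift_def by simp
  qed
qed

lemma max_flow_fwd_nbhd:
  assumes W: "(x,t) \<in> flow_domain D f x0" and t: "0 \<le> t" and \<epsilon>: "\<epsilon> > 0"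
  shows "\<exists>\<delta>>0. \<forall>x' t'. dist x' x < \<delta> \<longrightarrow> 0 \<le> t' \<longrightarrow> \<bar>t' - t\<bar> < \<delta> \<longrightarrow>
     (x',t') \<in> flow_domain D f x0 \<and> dist (max_flow D f x0 (x',t')) (max_flow D f x0 (x,t)) < \<epsilon>"
proof -
  obtain J u where A: "psi_lift D f x0 x J u" "t \<in> J" using flow_domainE[OF W] by blast
  have "lifts_near D f H_fwd x t (u t)"
    using path_lift_stable[OF open_D lh _ _ fwd_of_psi_lift[OF A t] t] H_fwd_bwd_isCont by simp
  then obtain \<delta> where \<delta>: "\<delta> > 0" "\<forall>x' t'. dist x' x < \<delta> \<longrightarrow> 0 \<le> t' \<longrightarrow> \<bar>t' - t\<bar> < \<delta> \<longrightarrow>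
      x' \<in> D \<and> (\<exists>v. path_lift D f H_fwd x' t' v \<and> dist (v t') (u t) < \<epsilon>)"
    using \<epsilon> unfolding lifts_near_def by blast
  show ?thesis
  proof (intro exI[of _ \<delta>] conjI allI impI)
    fix x' t' assume a: "dist x' x < \<delta>" "0 \<le> t'" "\<bar>t' - t\<bar> < \<delta>"
    then obtain v where v: "path_lift D f H_fwd x' t' v" "dist (v t') (u t) < \<epsilon>" using \<delta>(2) by blast
    have B: "psi_lift D f x0 x' {0..t'} v" by (rule psi_lift_of_fwd[OF v(1) a(2)])
    show "(x',t') \<in> flow_domain D f x0" using max_flow_eq(1)[OF B] a(2) by simp
    show "dist (max_flow D f x0 (x',t')) (max_flow D f x0 (x,t)) < \<epsilon>"
      using max_flow_eq(2)[OF B] max_flow_eq(2)[OF A] v(2) a(2) by simp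
  qed (rule \<delta>(1))
qed

lemma max_flow_bwd_nbhd:
  assumes W: "(x,t) \<in> flow_domain D f x0" and t: "t \<le> 0" and \<epsilon>: "\<epsilon> > 0"
  shows "\<exists>\<delta>>0. \<forall>x' t'. dist x' x < \<delta> \<longrightarrow> t' \<le> 0 \<longrightarrow> \<bar>t' - t\<bar> < \<delta> \<longrightarrow>
     (x',t') \<in> flow_domain D f x0 \<and> dist (max_flow D f x0 (x',t')) (max_flow D f x0 (x,t)) < \<epsilon>"
proof -
  obtain J u where A: "psi_lift D f x0 x J u" "t \<in> J" using flow_domainE[OF W] by blast
  have "lifts_near D f H_bwd x (-t) (u (- (-t)))"
    using path_lift_stable[OF open_D lh _ _ bwd_of_psi_lift[OF A t]] H_fwd_bwd_isCont t by simp
  then obtain \<delta> where \<delta>: "\<delta> > 0" "\<forall>x' t'. dist x' x < \<delta> \<longrightarrow> 0 \<le> t' \<longrightarrow> \<bar>t' - (-t)\<bar> < \<delta> \<longrightarrow>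
      x' \<in> D \<and> (\<exists>v. path_lift D f H_bwd x' t' v \<and> dist (v t') (u t) < \<epsilon>)"
    using \<epsilon> unfolding lifts_near_def by auto
  show ?thesis
  proof (intro exI[of _ \<delta>] conjI allI impI)
    fix x' t' assume a: "dist x' x < \<delta>" "t' \<le> 0" "\<bar>t' - t\<bar> < \<delta>"
    then obtain v where v: "path_lift D f H_bwd x' (-t') v" "dist (v (-t')) (u t) < \<epsilon>"
      using \<delta>(2)[rule_format, of x' "-t'"] by (auto simp: abs_minus_commute)
    have B: "psi_lift D f x0 x' {- (-t')..0} (\<lambda>s. v (-s))" using psi_lift_of_bwd[OF v(1)] a(2) by simp
    have t': "t' \<in> {- (-t')..0}" using a(2) by simp
    show "(x',t') \<in> flow_domain D f x0" using max_flow_eq(1)[OF B t'] .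
    show "dist (max_flow D f x0 (x',t')) (max_flow D f x0 (x,t)) < \<epsilon>"
      using max_flow_eq(2)[OF B t'] max_flow_eq(2)[OF A] v(2) by simp
  qed (rule \<delta>(1))
qed

lemma max_flow_nbhd:
  assumes W: "p \<in> flow_domain D f x0" and \<epsilon>: "\<epsilon> > 0"
  shows "\<exists>\<delta>>0. \<forall>q. dist q p < \<delta> \<longrightarrow>
    q \<in> flow_domain D f x0 \<and> dist (max_flow D f x0 q) (max_flow D f x0 p) < \<epsilon>"
proof -
  obtain x t where p: "p = (x,t)" by (cases p)
  note W' = W[unfolded p]
  have "\<exists>\<delta>>0. \<forall>q. dist q (x,t) < \<delta> \<longrightarrow>
    (\<lambda>q. q \<in> flow_domain D f x0 \<and> dist (max_flow D f x0 q) (max_flow D f x0 (x,t)) < \<epsilon>) q"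
    by (rule nbhd_from_one_sided)
      (use max_flow_fwd_nbhd[OF W' _ \<epsilon>] max_flow_bwd_nbhd[OF W' _ \<epsilon>] in simp_all)
  then show ?thesis unfolding p by simp
qed

lemma flow_domain_open: "open (flow_domain D f x0)"
  unfolding open_dist
proof
  fix p assume "p \<in> flow_domain D f x0"
  then obtain \<delta> where "\<delta> > 0" "\<forall>q. dist q p < \<delta> \<longrightarrow> q \<in> flow_domain D f x0 \<and>
      dist (max_flow D f x0 q) (max_flow D f x0 p) < 1"
    using max_flow_nbhd[OF _ zero_less_one] by blast
  then show "\<exists>e>0. \<forall>q. dist q p < e \<longrightarrow> q \<in> flow_domain D f x0" by blast
qed

lemma max_flow_continuous: "continuous_on (flow_domain D f x0) (max_flow D f x0)"
  unfolding continuous_on_iff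
proof (intro ballI allI impI)
  fix p and \<epsilon> :: real assume "p \<in> flow_domain D f x0" "\<epsilon> > 0"
  then obtain \<delta> where "\<delta> > 0" "\<forall>q. dist q p < \<delta> \<longrightarrow> q \<in> flow_domain D f x0 \<and>
      dist (max_flow D f x0 q) (max_flow D f x0 p) < \<epsilon>"
    using max_flow_nbhd by blast
  then show "\<exists>\<delta>>0. \<forall>q\<in>flow_domain D f x0. dist q p < \<delta> \<longrightarrow>
      dist (max_flow D f x0 q) (max_flow D f x0 p) < \<epsilon>" by blast
qed

lemma flow_domain_interval: "is_interval {t. (x,t) \<in> flow_domain D f x0}"
  unfolding is_interval_1
proof (intro ballI allI impI)
  fix a b y assume "a \<in> {t. (x,t) \<in> flow_domain D f x0}" "b \<in> {t. (x,t) \<in> flow_domain D f x0}"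
    and y: "a \<le> y \<and> y \<le> b"
  then obtain Ja ua Jb ub where A: "psi_lift D f x0 x Ja ua" "a \<in> Ja"
    and B: "psi_lift D f x0 x Jb ub" "b \<in> Jb"
    by (metis flow_domainE mem_Collect_eq)
  text \<open>\<open>y\<close> lies between \<open>0\<close> and \<open>b\<close> or between \<open>a\<close> and \<open>0\<close>.\<close>
  show "y \<in> {t. (x,t) \<in> flow_domain D f x0}"
  proof (cases "0 \<le> y")
    case True
    then have "y \<in> Jb" using B y unfolding psi_lift_def is_interval_1 by blast
    then show ?thesis using max_flow_eq(1)[OF B(1)] by blast
  next
    case False
    then have "y \<in> Ja" using A y unfolding psi_lift_def is_interval_1 by (meson linear)
    then show ?thesis using max_flow_eq(1)[OF A(1)] by blast
  qed
qed

lemma max_flow_zero: "x \<in> D \<Longrightarrow> (x,0) \<in> flow_domain D f x0" "x \<in> D \<Longrightarrow> max_flow D f x0 (x,0) = x"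
  using max_flow_eq[OF psi_lift_const] by auto

lemma max_flow_psi_lift:
  assumes "x \<in> D"
  shows "psi_lift D f x0 x {t. (x,t) \<in> flow_domain D f x0} (\<lambda>s. max_flow D f x0 (x,s))"
  unfolding psi_lift_def
proof (intro conjI ballI)
  show "continuous_on {t. (x, t) \<in> flow_domain D f x0} (\<lambda>s. max_flow D f x0 (x, s))"
    by (rule continuous_on_compose2[OF max_flow_continuous]) (intro continuous_intros, blast)
  show "is_interval {t. (x, t) \<in> flow_domain D f x0}" by (rule flow_domain_interval)
  show "0 \<in> {t. (x, t) \<in> flow_domain D f x0}" "max_flow D f x0 (x, 0) = x"
    using max_flow_zero assms by simp_all
  show "(\<lambda>s. max_flow D f x0 (x, s)) ` {t. (x, t) \<in> flow_domain D f x0} \<subseteq> D"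
    using max_flow_mem(2) by blast
  fix s assume "s \<in> {t. (x, t) \<in> flow_domain D f x0}"
  then show "f (max_flow D f x0 (x, s)) = Psi (f x0) (f x) s" using max_flow_mem(1) by simp
qed

lemma max_flow_is_flow: "is_flow D (flow_domain D f x0) (max_flow D f x0)"
  unfolding is_flow_def
proof (intro conjI ballI allI impI)
  have "flow_domain D f x0 \<subseteq> D \<times> UNIV" using max_flow_mem(3) by auto
  then show "openin (top_of_set (D \<times> UNIV)) (flow_domain D f x0)"
    using flow_domain_open by (simp add: openin_open_eq open_Times open_D)
  show "continuous_on (flow_domain D f x0) (max_flow D f x0)" by (rule max_flow_continuous)
  show "max_flow D f x0 ` flow_domain D f x0 \<subseteq> D" using max_flow_mem(2) by auto
  show "is_interval {t. (x,t) \<in> flow_domain D f x0}" for x by (rule flow_domain_interval)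
  show "(x,0) \<in> flow_domain D f x0" "max_flow D f x0 (x,0) = x" if "x \<in> D" for x
    using max_flow_zero that by auto
next
  fix x t1 t2 assume a: "(x,t1) \<in> flow_domain D f x0" "(x, t1 + t2) \<in> flow_domain D f x0"
  have "psi_lift D f x0 (max_flow D f x0 (x,t1)) {s. (x, t1 + s) \<in> flow_domain D f x0}
      (\<lambda>s. max_flow D f x0 (x, t1 + s))"
    using psi_lift_shift[OF max_flow_psi_lift[OF max_flow_mem(3)[OF a(1)]]] a(1) by simp
  from max_flow_eq[OF this] a(2)
  show "(max_flow D f x0 (x, t1), t2) \<in> flow_domain D f x0"
    "max_flow D f x0 (max_flow D f x0 (x, t1), t2) = max_flow D f x0 (x, t1 + t2)"
    by simp_all
qed

lemma max_flow_conj_flow: "conj_flow D f x0 (flow_domain D f x0) (max_flow D f x0)"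
  unfolding conj_flow_def using max_flow_is_flow max_flow_mem(1) by blast

lemma conj_flow_psi_lift:
  assumes C: "conj_flow D f x0 DP P" and p: "(x,t) \<in> DP"
  shows "psi_lift D f x0 x {s. (x,s) \<in> DP} (\<lambda>s. P (x,s))"
proof -
  have F: "openin (top_of_set (D \<times> UNIV)) DP" "continuous_on DP P" "P ` DP \<subseteq> D"
    "\<forall>x\<in>D. is_interval {t. (x, t) \<in> DP} \<and> (x, 0) \<in> DP" "\<forall>x\<in>D. P (x, 0) = x"
    and fP: "\<And>x t. (x,t) \<in> DP \<Longrightarrow> f (P (x,t)) = Psi (f x0) (f x) t"
    using C unfolding conj_flow_def is_flow_def by blast+
  have x: "x \<in> D" using openin_imp_subset[OF F(1)] p by auto
  have "continuous_on {s. (x,s) \<in> DP} (\<lambda>s. P (x,s))"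
    by (rule continuous_on_compose2[OF F(2)]) (auto intro: continuous_intros)
  then show ?thesis using F(3-5) fP x unfolding psi_lift_def by auto
qed

lemma conj_flow_agree:
  assumes "conj_flow D f x0 DP1 P1" "conj_flow D f x0 DP2 P2" "p \<in> DP1" "p \<in> DP2"
  shows "P1 p = P2 p"
proof -
  obtain x t where p: "p = (x,t)" by (cases p)
  show ?thesis
    using psi_lift_agree[OF conj_flow_psi_lift[OF assms(1)] conj_flow_psi_lift[OF assms(2)]] assms(3,4)
    unfolding p by simp
qed

lemma conj_flow_subset: "conj_flow D f x0 DP P \<Longrightarrow> DP \<subseteq> flow_domain D f x0"
proof
  fix p assume C: "conj_flow D f x0 DP P" and "p \<in> DP"
  moreover obtain x t where p: "p = (x,t)" by (cases p)
  ultimately show "p \<in> flow_domain D f x0"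
    using max_flow_eq(1)[OF conj_flow_psi_lift[OF C]] by simp
qed

end

section \<open>The \<open>C\<^sup>1\<close> case: the maximal flow solves \<open>x' = F(x)\<close>\<close>

text \<open>The derivative of \<open>(x,t) \<mapsto> \<Psi>(f x, t)\<close> at \<open>(x,t)\<close>, where \<open>L\<close> is the derivative of \<open>f\<close> at \<open>x\<close>
  and \<open>y = f x\<close>.\<close>

definition Psi_deriv ::
  "('a::real_normed_vector \<Rightarrow>\<^sub>L 'b::real_normed_vector) \<Rightarrow> 'b \<Rightarrow> 'b \<Rightarrow> real \<Rightarrow> ('a \<times> real) \<Rightarrow>\<^sub>L 'b"
  where "Psi_deriv L y0 y t = exp (- t) *\<^sub>R (L o\<^sub>L fst_blinfun)
    - (blinfun_scaleR_left (exp (- t) *\<^sub>R (y - y0)) o\<^sub>L snd_blinfun)"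

lemma Psi_deriv_apply:
  "Psi_deriv L y0 y t h = exp (- t) *\<^sub>R L (fst h) - snd h *\<^sub>R (exp (- t) *\<^sub>R (y - y0))"
  unfolding Psi_deriv_def by (simp add: blinfun.bilinear_simps)

lemma Psi_comp_has_derivative:
  assumes f: "(f has_derivative blinfun_apply L) (at x)"
  shows "((\<lambda>q. Psi y0 (f (fst q)) (snd q)) has_derivative Psi_deriv L y0 (f x) t) (at (x,t))"
proof -
  have "(fst has_derivative fst) (at (x,t))"
    by (rule bounded_linear_imp_has_derivative[OF bounded_linear_fst])
  moreover have "(f has_derivative blinfun_apply L) (at (fst (x,t)))" using f by simp
  ultimately have "((\<lambda>q. f (fst q)) has_derivative (\<lambda>h. L (fst h))) (at (x,t))"
    by (rule has_derivative_compose)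
  then have "((\<lambda>q. y0 + exp (- snd q) *\<^sub>R (f (fst q) - y0)) has_derivative
      (\<lambda>h. 0 + (exp (- t) *\<^sub>R (L (fst h) - 0) + (exp (- t) * - snd h) *\<^sub>R (f x - y0)))) (at (x,t))"
    by (auto intro!: derivative_eq_intros)
  moreover have "(\<lambda>h. 0 + (exp (- t) *\<^sub>R (L (fst h) - 0) + (exp (- t) * - snd h) *\<^sub>R (f x - y0)))
      = blinfun_apply (Psi_deriv L y0 (f x) t)"
    by (rule ext) (simp add: Psi_deriv_apply algebra_simps)
  ultimately show ?thesis unfolding Psi_def by simp
qed

definition max_flow_deriv ::
  "'a::real_normed_vector set \<Rightarrow> ('a \<Rightarrow> 'b::real_normed_vector) \<Rightarrow> 'a \<Rightarrow> ('a \<Rightarrow> 'a \<Rightarrow>\<^sub>L 'b) \<Rightarrow>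
    'a \<times> real \<Rightarrow> ('a \<times> real) \<Rightarrow>\<^sub>L 'a"
  where "max_flow_deriv D f x0 f' p = Blinfun (inv (blinfun_apply (f' (max_flow D f x0 p))))
    o\<^sub>L Psi_deriv (f' (fst p)) (f x0) (f (fst p)) (snd p)"

context
  fixes D :: "'a::real_normed_vector set" and f :: "'a \<Rightarrow> 'b::real_normed_vector" and x0 :: 'a
    and f' :: "'a \<Rightarrow> 'a \<Rightarrow>\<^sub>L 'b"
  assumes open_D: "open D" and lh: "local_homeo_on D f" and C1: "local_C1_diffeo_on D f f'"
begin

lemma f_has_derivative: "x \<in> D \<Longrightarrow> (f has_derivative blinfun_apply (f' x)) (at x)"
  using C1 unfolding local_C1_diffeo_on_def by blast

lemma C1_chart:
  assumes "z \<in> D"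
  obtains U g g' where "open U" "z \<in> U" "U \<subseteq> D" "open (f ` U)" "homeomorphism U (f ` U) f g"
    "\<And>y. y \<in> f ` U \<Longrightarrow> (g has_derivative blinfun_apply (g' y)) (at y)" "continuous_on (f ` U) g'"
  using C1 assms unfolding local_C1_diffeo_on_def by metis

lemma chart_deriv_inverse:
  assumes U: "open U" "U \<subseteq> D" "open (f ` U)" "homeomorphism U (f ` U) f g"
    and g: "\<And>y. y \<in> f ` U \<Longrightarrow> (g has_derivative blinfun_apply (g' y)) (at y)"
    and w: "w \<in> U"
  shows "inv (blinfun_apply (f' w)) = blinfun_apply (g' (f w))" "f' w (g' (f w) k) = k"
proof -
  have gf: "\<And>y. y \<in> U \<Longrightarrow> g (f y) = y" and fg: "\<And>y. y \<in> f ` U \<Longrightarrow> f (g y) = y"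
    using U(4) unfolding homeomorphism_def by auto
  have fw: "f w \<in> f ` U" using w by blast
  have "((\<lambda>x. g (f x)) has_derivative (\<lambda>h. g' (f w) (f' w h))) (at w)"
    using has_derivative_compose[OF f_has_derivative g[OF fw]] w U(2) by blast
  then have "((\<lambda>x. x) has_derivative (\<lambda>h. g' (f w) (f' w h))) (at w)"
    by (rule has_derivative_transform_within_open[OF _ U(1) w]) (simp add: gf)
  then have left: "(\<lambda>h. g' (f w) (f' w h)) = (\<lambda>h. h)"
    by (rule has_derivative_unique[OF _ has_derivative_ident])
  have "((\<lambda>y. f (g y)) has_derivative (\<lambda>k. f' w (g' (f w) k))) (at (f w))"
    using has_derivative_compose[OF g[OF fw], of f "f' w"] f_has_derivative w U(2) gf[OF w] by auto
  then have "((\<lambda>y. y) has_derivative (\<lambda>k. f' w (g' (f w) k))) (at (f w))"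
    by (rule has_derivative_transform_within_open[OF _ U(3) fw]) (simp add: fg)
  then have right: "(\<lambda>k. f' w (g' (f w) k)) = (\<lambda>k. k)"
    by (rule has_derivative_unique[OF _ has_derivative_ident])
  show "inv (blinfun_apply (f' w)) = blinfun_apply (g' (f w))"
    by (rule inv_unique_comp) (use left right in \<open>auto simp: fun_eq_iff\<close>)
  show "f' w (g' (f w) k) = k" using right by metis
qed

text \<open>Hence \<open>f' z\<close> is invertible with bounded linear inverse, and the inverse derivative is a
  continuous function of \<open>z\<close> (locally it is \<open>g' \<circ> f\<close>).\<close>

lemma deriv_inverse:
  assumes z: "z \<in> D"
  shows "blinfun_apply (Blinfun (inv (blinfun_apply (f' z)))) = inv (blinfun_apply (f' z))"
    "f' z (inv (blinfun_apply (f' z)) y) = y"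
proof -
  obtain U g g' where U: "open U" "z \<in> U" "U \<subseteq> D" "open (f ` U)" "homeomorphism U (f ` U) f g"
    "\<And>y. y \<in> f ` U \<Longrightarrow> (g has_derivative blinfun_apply (g' y)) (at y)"
    using C1_chart[OF z] by metis
  note inverse = chart_deriv_inverse[OF U(1,3,4,5) U(6) U(2)]
  show "blinfun_apply (Blinfun (inv (blinfun_apply (f' z)))) = inv (blinfun_apply (f' z))"
    by (simp add: inverse(1) blinfun_apply_inverse)
  show "f' z (inv (blinfun_apply (f' z)) y) = y" by (simp add: inverse)
qed

lemma deriv_inverse_continuous: "continuous_on D (\<lambda>z. Blinfun (inv (blinfun_apply (f' z))))"
proof (intro continuous_at_imp_continuous_on ballI)
  fix z assume z: "z \<in> D"
  obtain U g g' where U: "open U" "z \<in> U" "U \<subseteq> D" "open (f ` U)" "homeomorphism U (f ` U) f g"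
    "\<And>y. y \<in> f ` U \<Longrightarrow> (g has_derivative blinfun_apply (g' y)) (at y)" "continuous_on (f ` U) g'"
    using C1_chart[OF z] by blast
  have "continuous_on U (\<lambda>w. g' (f w))"
    by (rule continuous_on_compose2[OF U(7) homeomorphism_cont1[OF U(5)]]) blast
  moreover have "Blinfun (inv (blinfun_apply (f' w))) = g' (f w)" if "w \<in> U" for w
    by (simp add: chart_deriv_inverse(1)[OF U(1,3,4,5) U(6) that] blinfun_apply_inverse)
  ultimately have "continuous_on U (\<lambda>w. Blinfun (inv (blinfun_apply (f' w))))"
    by (simp cong: continuous_on_cong)
  then show "isCont (\<lambda>z. Blinfun (inv (blinfun_apply (f' z)))) z"
    using U(1,2) continuous_on_eq_continuous_at by blast
qed

text \<open>Every solution of \<open>x' = F(x)\<close> is a \<open>\<Psi>\<close>-lift: along it, \<open>e\<^sup>t (f(u t) - f x\<^sub>0)\<close> has zero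
  derivative, hence is constant.\<close>

lemma ode_solution_psi_lift:
  assumes I: "is_interval I" "0 \<in> I" and u0: "u 0 = x" and uI: "u ` I \<subseteq> D"
    and u': "\<And>t. t \<in> I \<Longrightarrow>
      (u has_vector_derivative (- (inv (blinfun_apply (f' (u t))) (f (u t) - f x0)))) (at t within I)"
  shows "psi_lift D f x0 x I u"
  unfolding psi_lift_def
proof (intro conjI ballI)
  show "is_interval I" "0 \<in> I" "u 0 = x" "u ` I \<subseteq> D" by fact+
  show "continuous_on I u" using u' by (rule continuous_on_vector_derivative)
  define h where "h = (\<lambda>t. exp t *\<^sub>R (f (u t) - f x0))"
  have "(h has_derivative (\<lambda>_. 0)) (at t within I)" if t: "t \<in> I" for t
  proof -
    let ?v = "- (inv (blinfun_apply (f' (u t))) (f (u t) - f x0))"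
    have utD: "u t \<in> D" using uI t by blast
    have "((\<lambda>s. f (u s)) has_derivative (\<lambda>s. f' (u t) (s *\<^sub>R ?v))) (at t within I)"
      using has_derivative_compose[OF u'[OF t, unfolded has_vector_derivative_def] f_has_derivative[OF utD]] .
    moreover have "f' (u t) (s *\<^sub>R ?v) = - (s *\<^sub>R (f (u t) - f x0))" for s
      by (simp add: blinfun.bilinear_simps deriv_inverse(2)[OF utD])
    ultimately have "((\<lambda>s. f (u s)) has_derivative (\<lambda>s. - (s *\<^sub>R (f (u t) - f x0)))) (at t within I)"
      by simp
    then have "(h has_derivative (\<lambda>s. exp t *\<^sub>R (- (s *\<^sub>R (f (u t) - f x0)) - 0)
        + (exp t * s) *\<^sub>R (f (u t) - f x0))) (at t within I)"
      unfolding h_def by (auto intro!: derivative_eq_intros)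
    then show ?thesis by (simp add: algebra_simps)
  qed
  then obtain c where c: "\<forall>t\<in>I. h t = c"
    using has_derivative_zero_constant[OF is_interval_convex[OF I(1)]] by blast
  fix s assume s: "s \<in> I"
  have "exp s *\<^sub>R (f (u s) - f x0) = f x - f x0" using c s I(2) u0 unfolding h_def by force
  then have "f (u s) - f x0 = exp (- s) *\<^sub>R (f x - f x0)"
    by (metis (no_types, lifting) exp_minus_inverse mult.commute scaleR_one scaleR_scaleR)
  then show "f (u s) = Psi (f x0) (f x) s" unfolding Psi_def by (simp add: algebra_simps)
qed

text \<open>Near a point \<open>p\<close> of its domain the maximal flow is \<open>g \<circ> \<Psi> \<circ> (f \<times> id)\<close>, with \<open>g\<close> a local
  inverse of \<open>f\<close> around \<open>max_flow p\<close>; this makes it as smooth as \<open>f\<close>.\<close>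

lemma max_flow_chart_repr:
  assumes W: "p \<in> flow_domain D f x0" and U: "open U" "max_flow D f x0 p \<in> U" "homeomorphism U (f ` U) f g"
  shows "\<exists>\<delta>>0. \<forall>q\<in>ball p \<delta>. q \<in> flow_domain D f x0 \<and>
    max_flow D f x0 q = g (Psi (f x0) (f (fst q)) (snd q))"
proof -
  have gf: "\<And>y. y \<in> U \<Longrightarrow> g (f y) = y" using U(3) unfolding homeomorphism_def by auto
  obtain \<rho> where \<rho>: "\<rho> > 0" "ball (max_flow D f x0 p) \<rho> \<subseteq> U" using U(1,2) open_contains_ball by blast
  obtain \<delta> where \<delta>: "\<delta> > 0" "\<forall>q. dist q p < \<delta> \<longrightarrow>
      q \<in> flow_domain D f x0 \<and> dist (max_flow D f x0 q) (max_flow D f x0 p) < \<rho>"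
    using max_flow_nbhd[OF open_D lh W \<rho>(1)] by blast
  show ?thesis
  proof (intro exI[of _ \<delta>] conjI ballI)
    fix q assume "q \<in> ball p \<delta>"
    then have "dist q p < \<delta>" by (simp add: dist_commute)
    then have "q \<in> flow_domain D f x0 \<and> dist (max_flow D f x0 q) (max_flow D f x0 p) < \<rho>"
      using \<delta>(2) by blast
    then have q: "q \<in> flow_domain D f x0" "max_flow D f x0 q \<in> U"
      using \<rho>(2) by (auto simp: dist_commute)
    then show "q \<in> flow_domain D f x0" by simp
    obtain a b where qab: "q = (a,b)" by (cases q)
    show "max_flow D f x0 q = g (Psi (f x0) (f (fst q)) (snd q))"
      using max_flow_mem(1)[OF open_D lh q(1)[unfolded qab]] gf[OF q(2)] qab by simp
  qed (rule \<delta>(1))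
qed

lemma max_flow_has_derivative:
  assumes W: "p \<in> flow_domain D f x0"
  shows "(max_flow D f x0 has_derivative max_flow_deriv D f x0 f' p) (at p)"
proof -
  obtain x t where p: "p = (x,t)" by (cases p)
  define z where "z = max_flow D f x0 p"
  have zD: "z \<in> D" and xD: "x \<in> D" and fz: "f z = Psi (f x0) (f x) t"
    using max_flow_mem[OF open_D lh W[unfolded p]] z_def p by auto
  obtain U g g' where U: "open U" "z \<in> U" "U \<subseteq> D" "open (f ` U)" "homeomorphism U (f ` U) f g"
    "\<And>y. y \<in> f ` U \<Longrightarrow> (g has_derivative blinfun_apply (g' y)) (at y)"
    using C1_chart[OF zD] by metis
  obtain \<delta> where \<delta>: "\<delta> > 0" "\<forall>q\<in>ball p \<delta>. q \<in> flow_domain D f x0 \<and>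
      max_flow D f x0 q = g (Psi (f x0) (f (fst q)) (snd q))"
    using max_flow_chart_repr[OF W U(1) U(2)[unfolded z_def] U(5)] by blast
  have "(g has_derivative g' (f z)) (at ((\<lambda>q. Psi (f x0) (f (fst q)) (snd q)) (x,t)))"
    using U(6)[OF imageI[OF U(2)]] fz by simp
  from has_derivative_compose[OF Psi_comp_has_derivative[OF f_has_derivative[OF xD]] this]
  have "((\<lambda>q. g (Psi (f x0) (f (fst q)) (snd q))) has_derivative
      (\<lambda>h. g' (f z) (Psi_deriv (f' x) (f x0) (f x) t h))) (at p)"
    unfolding p .
  moreover have "(\<lambda>h. g' (f z) (Psi_deriv (f' x) (f x0) (f x) t h)) = max_flow_deriv D f x0 f' p"
    using chart_deriv_inverse(1)[OF U(1,3,4,5) U(6) U(2)] deriv_inverse(1)[OF zD]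
    unfolding max_flow_deriv_def z_def[symmetric] by (simp add: fun_eq_iff p)
  ultimately have "((\<lambda>q. g (Psi (f x0) (f (fst q)) (snd q))) has_derivative max_flow_deriv D f x0 f' p) (at p)"
    by simp
  then show ?thesis
    by (rule has_derivative_transform_within_open[OF _ open_ball centre_in_ball[THEN iffD2, OF \<delta>(1)]])
      (use \<delta>(2) in simp)
qed

lemma max_flow_deriv_continuous:
  "continuous_on (flow_domain D f x0) (max_flow_deriv D f x0 f')"
proof -
  have sub: "max_flow D f x0 ` flow_domain D f x0 \<subseteq> D" "fst ` flow_domain D f x0 \<subseteq> D"
    using max_flow_mem[OF open_D lh] by force+
  have f'_cont: "continuous_on D f'" and f_cont: "continuous_on D f"
    using C1 local_homeo_continuous[OF lh]
    by (auto simp: local_C1_diffeo_on_def intro: continuous_at_imp_continuous_on)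
  have "continuous_on (flow_domain D f x0) (\<lambda>p. Blinfun (inv (blinfun_apply (f' (max_flow D f x0 p)))))"
    by (rule continuous_on_compose2[OF deriv_inverse_continuous max_flow_continuous[OF open_D lh] sub(1)])
  moreover have "continuous_on (flow_domain D f x0) (\<lambda>p. f' (fst p))" "continuous_on (flow_domain D f x0) (\<lambda>p. f (fst p))"
    by (auto intro!: continuous_on_compose2[OF f'_cont _ sub(2)] continuous_on_compose2[OF f_cont _ sub(2)]
      continuous_intros)
  ultimately show ?thesis unfolding max_flow_deriv_def Psi_deriv_def
    by (intro continuous_intros bounded_linear.continuous_on[OF bounded_linear_blinfun_scaleR_left])
qed

lemma max_flow_time_derivative:
  assumes W: "(x,t) \<in> flow_domain D f x0"
  shows "((\<lambda>s. max_flow D f x0 (x,s)) has_vector_derivative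
    - (inv (blinfun_apply (f' (max_flow D f x0 (x,t)))) (f (max_flow D f x0 (x,t)) - f x0))) (at t)"
proof -
  define z where "z = max_flow D f x0 (x,t)"
  have zD: "z \<in> D" and fz: "f z - f x0 = exp (- t) *\<^sub>R (f x - f x0)"
    using max_flow_mem[OF open_D lh W] unfolding z_def Psi_def by auto
  have lin: "linear (inv (blinfun_apply (f' z)))"
    using blinfun.bounded_linear_right[of "Blinfun (inv (blinfun_apply (f' z)))"] deriv_inverse(1)[OF zD]
    by (simp add: bounded_linear.linear)
  have "((\<lambda>s. (x,s)) has_derivative (\<lambda>h. (0,h))) (at t)"
    by (auto intro!: derivative_eq_intros)
  from has_derivative_compose[OF this max_flow_has_derivative[OF W]]
  have "((\<lambda>s. max_flow D f x0 (x,s)) has_derivative (\<lambda>h. max_flow_deriv D f x0 f' (x,t) (0,h))) (at t)" .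
  moreover have "max_flow_deriv D f x0 f' (x,t) (0,h) = h *\<^sub>R (- inv (blinfun_apply (f' z)) (f z - f x0))" for h
    using deriv_inverse(1)[OF zD] linear_cmul[OF lin] linear_neg[OF lin]
    unfolding max_flow_deriv_def z_def[symmetric]
    by (simp add: Psi_deriv_apply blinfun.zero_right fz)
  ultimately show ?thesis unfolding has_vector_derivative_def z_def by simp
qed

lemma ode_solution_max_flow:
  assumes "is_interval I" "0 \<in> I" "u 0 = x" "u ` I \<subseteq> D"
    and "\<And>t. t \<in> I \<Longrightarrow>
      (u has_vector_derivative (- (inv (blinfun_apply (f' (u t))) (f (u t) - f x0)))) (at t within I)"
  shows "I \<subseteq> {t. (x,t) \<in> flow_domain D f x0} \<and> (\<forall>t\<in>I. u t = max_flow D f x0 (x,t))"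
  using max_flow_eq[OF open_D lh ode_solution_psi_lift[OF assms]] by auto

end

theorem lemma2p1:
  fixes D :: "'a::banach set" and f :: "'a \<Rightarrow> 'b::banach" and x0 :: 'a
    and f' :: "'a \<Rightarrow> 'a \<Rightarrow>\<^sub>L 'b"
  assumes "open D" and "connected D" and "D \<noteq> {}" and "x0 \<in> D"
    and "local_homeo_on D f"
  shows "(\<exists>DP P. conj_flow D f x0 DP P)
    \<and> (\<forall>DP1 P1 DP2 P2. conj_flow D f x0 DP1 P1 \<longrightarrow> conj_flow D f x0 DP2 P2 \<longrightarrow>
          (\<forall>p\<in>DP1 \<inter> DP2. P1 p = P2 p))
    \<and> (\<exists>DP P. conj_flow D f x0 DP P
          \<and> (\<forall>DP' P'. conj_flow D f x0 DP' P' \<longrightarrow> DP' \<subseteq> DP)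
          \<and> (\<forall>DP' P'. conj_flow D f x0 DP' P' \<and> (\<forall>DP'' P''. conj_flow D f x0 DP'' P'' \<longrightarrow> DP'' \<subseteq> DP')
                \<longrightarrow> DP' = DP \<and> (\<forall>p\<in>DP. P' p = P p))
          \<and> (local_C1_diffeo_on D f f' \<longrightarrow>
              (let F = (\<lambda>x. - (inv (blinfun_apply (f' x)) (f x - f x0))) in
                (\<exists>P'. (\<forall>p\<in>DP. (P has_derivative blinfun_apply (P' p)) (at p)) \<and> continuous_on DP P')
              \<and> (\<forall>x\<in>D. \<forall>t. (x, t) \<in> DP \<longrightarrow>
                   ((\<lambda>s. P (x, s)) has_vector_derivative F (P (x, t))) (at t within {s. (x, s) \<in> DP}))
              \<and> (\<forall>x\<in>D. \<forall>I u. is_interval I \<and> 0 \<in> I \<and> u 0 = x \<and> u ` I \<subseteq> D \<and>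
                   (\<forall>t\<in>I. (u has_vector_derivative F (u t)) (at t within I))
                   \<longrightarrow> I \<subseteq> {t. (x, t) \<in> DP} \<and> (\<forall>t\<in>I. u t = P (x, t))))))"
proof -
  note open_D = assms(1) and lh = assms(5)
  let ?W = "flow_domain D f x0" and ?\<Phi> = "max_flow D f x0"
  have conj: "conj_flow D f x0 ?W ?\<Phi>" by (rule max_flow_conj_flow[OF open_D lh])
  note agree = conj_flow_agree[OF open_D lh] and maximal = conj_flow_subset[OF open_D lh]
  show ?thesis
    unfolding Let_def
    apply (intro conjI exI[of _ ?W] exI[of _ ?\<Phi>] allI impI ballI)
    subgoal by (rule conj)
    subgoal using agree by blast
    subgoal by (rule conj)
    subgoal using maximal by blast
    subgoal using maximal conj by blast
    subgoal using agree conj by blast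
    subgoal premises C1
      using max_flow_has_derivative[OF open_D lh C1] max_flow_deriv_continuous[OF open_D lh C1] by blast
    subgoal
      using max_flow_time_derivative[OF open_D lh] has_vector_derivative_at_within by blast
    subgoal using ode_solution_max_flow[OF open_D lh] by blast
    subgoal using ode_solution_max_flow[OF open_D lh] by blast
    done
qed

end
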